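(* Let $H$ be a real Hilbert space of infinite dimension and let $Q$ be a complete $\sigma$-finite probability measure on $H$ such that $Q(A)=0$ for every finite dimensional affine subspace $A$ of $H$. Then for every integer $k \geq 1$ and every finite dimensional affine subspace $A$ of $H^k$, we have $Q^{\otimes k}(A)=0$.
   Context: $Q^{\otimes k}$ denotes the $k$-fold product measure of $Q$ on $H^k$. An affine subspace of a vector space is a set of the form $a + V$ with $V$ a vector subspace; it is finite dimensional if $V$ is. *)

theory Defs
  imports "HOL-Analysis.Analysis" "HOL-Probability.Probability"
begin

definition fin_dim_affine :: "'a::real_vector set \<Rightarrow> bool" where
  "fin_dim_affine A \<longleftrightarrow>
     (\<exists>a V B. subspace V \<and> finite B \<and> V \<subseteq> span B \<and> A = (\<lambda>v. a + v) ` V)"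

(* H^k realised as the carrier of the product measure: extensional functions on {..<k},
   with componentwise vector operations. *)
definition kspace :: "nat \<Rightarrow> (nat \<Rightarrow> 'a) set" where
  "kspace k = PiE {..<k} (\<lambda>_. UNIV)"

definition kadd :: "nat \<Rightarrow> (nat \<Rightarrow> 'a::real_vector) \<Rightarrow> (nat \<Rightarrow> 'a) \<Rightarrow> (nat \<Rightarrow> 'a)" where
  "kadd k f g = (\<lambda>i\<in>{..<k}. f i + g i)"

definition kscale :: "nat \<Rightarrow> real \<Rightarrow> (nat \<Rightarrow> 'a::real_vector) \<Rightarrow> (nat \<Rightarrow> 'a)" where
  "kscale k c f = (\<lambda>i\<in>{..<k}. c *\<^sub>R f i)"

definition kzero :: "nat \<Rightarrow> (nat \<Rightarrow> 'a::real_vector)" where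
  "kzero k = (\<lambda>i\<in>{..<k}. 0)"

definition ksubspace :: "nat \<Rightarrow> (nat \<Rightarrow> 'a::real_vector) set \<Rightarrow> bool" where
  "ksubspace k V \<longleftrightarrow> V \<subseteq> kspace k \<and> kzero k \<in> V \<and>
     (\<forall>x\<in>V. \<forall>y\<in>V. kadd k x y \<in> V) \<and> (\<forall>c. \<forall>x\<in>V. kscale k c x \<in> V)"

definition kfin_dim :: "nat \<Rightarrow> (nat \<Rightarrow> 'a::real_vector) set \<Rightarrow> bool" where
  "kfin_dim k V \<longleftrightarrow> (\<exists>B. finite B \<and> B \<subseteq> kspace k \<and>
      (\<forall>W. ksubspace k W \<and> B \<subseteq> W \<longrightarrow> V \<subseteq> W))"

definition kfin_dim_affine :: "nat \<Rightarrow> (nat \<Rightarrow> 'a::real_vector) set \<Rightarrow> bool" where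
  "kfin_dim_affine k A \<longleftrightarrow>
     (\<exists>a\<in>kspace k. \<exists>V. ksubspace k V \<and> kfin_dim k V \<and> A = kadd k a ` V)"

end

theory Submission
  imports Defs
begin

text \<open>Every vector of a finite dimensional affine subspace of \<open>H\<^sup>k\<close> has its first coordinate
  in a finite dimensional affine subspace \<open>S\<close> of \<open>H\<close>. Such an \<open>S\<close> is closed, hence \<open>Q\<close>-measurable
  and \<open>Q\<close>-null, so the subspace lies in the null cylinder \<open>S \<times> H\<^sup>k\<^sup>-\<^sup>1\<close>.\<close>

lemma orthogonal_projection_fixes:
  fixes D :: "'a::real_inner set"
  assumes "finite D" "pairwise orthogonal D" "0 \<notin> D" "e \<in> D"
  shows "(\<Sum>d\<in>D. (d \<bullet> e / (d \<bullet> d)) *\<^sub>R d) = e"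
proof -
  have "(\<Sum>d\<in>D. (d \<bullet> e / (d \<bullet> d)) *\<^sub>R d) = (\<Sum>d\<in>D. if d = e then e else 0)"
  proof (rule sum.cong[OF refl])
    fix d assume d: "d \<in> D"
    show "(d \<bullet> e / (d \<bullet> d)) *\<^sub>R d = (if d = e then e else 0)"
    proof (cases "d = e")
      case True
      then show ?thesis using assms(3,4) by simp
    next
      case False
      then have "d \<bullet> e = 0" using pairwiseD[OF assms(2) d assms(4)] by (simp add: orthogonal_def)
      then show ?thesis using False by simp
    qed
  qed
  also have "\<dots> = e"
    using assms(1,4) by (simp add: sum.delta')
  finally show ?thesis .
qed

text \<open>With an orthogonal basis \<open>D\<close>, \<open>span D\<close> is the fixed-point set of the continuous
  orthogonal projection onto it.\<close>

lemma closed_span_finite: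
  fixes B :: "'a::real_inner set"
  assumes "finite B"
  shows "closed (span B)"
proof -
  obtain C where C: "finite C" "span C = span B" "pairwise orthogonal C"
    using basis_orthogonal[OF assms] by blast
  define D where "D = C - {0}"
  have D: "finite D" "pairwise orthogonal D" "0 \<notin> D"
    using C pairwise_subset[OF C(3)] by (auto simp: D_def)
  have "span D = span B"
    by (metis C(2) D_def insert_Diff_single span_insert_0)
  define P where "P x = (\<Sum>d\<in>D. (d \<bullet> x / (d \<bullet> d)) *\<^sub>R d)" for x
  have "linear P"
    unfolding P_def
    by (intro linear_compose_sum ballI)
      (simp add: linear_iff inner_add_right add_divide_distrib scaleR_add_left)
  then have "subspace {x. P x = x}"
    by (simp add: subspace_def linear_add linear_scale linear_0)
  moreover have "D \<subseteq> {x. P x = x}"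
    using orthogonal_projection_fixes[OF D] by (auto simp: P_def)
  ultimately have "span D \<subseteq> {x. P x = x}"
    by (rule span_minimal[rotated])
  moreover have "P x \<in> span D" for x
    unfolding P_def by (intro span_sum span_mul span_base)
  ultimately have "span D = {x. P x = x}"
    by (metis (mono_tags, lifting) mem_Collect_eq subsetI subset_antisym)
  moreover have "closed {x. P x = x}"
    using D(3) unfolding P_def by (intro closed_Collect_eq continuous_intros) auto
  ultimately show ?thesis
    using \<open>span D = span B\<close> by simp
qed

lemma kadd_in_kspace: "kadd k x y \<in> kspace k"
  by (simp add: kadd_def kspace_def)

lemma ksubspace_coordinate_preimage:
  fixes U :: "'a::real_vector set"
  assumes "subspace U" "i < k"
  shows "ksubspace k {x \<in> kspace k. x i \<in> U}"
  using assms
  unfolding ksubspace_def kspace_def kzero_def kadd_def kscale_def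
  by (simp add: subspace_0 subspace_add subspace_scale)

lemma kfin_dim_affine_coordinate:
  fixes A :: "(nat \<Rightarrow> 'a::real_vector) set"
  assumes "kfin_dim_affine k A" "i < k"
  obtains B c where "finite B" "\<And>x. x \<in> A \<Longrightarrow> x i \<in> (\<lambda>v. c + v) ` span B"
proof -
  obtain a V where V: "kfin_dim k V" and A: "A = kadd k a ` V"
    using assms(1) unfolding kfin_dim_affine_def by blast
  obtain B0 where B0: "finite B0" "B0 \<subseteq> kspace k"
    and V_least: "\<forall>W. ksubspace k W \<and> B0 \<subseteq> W \<longrightarrow> V \<subseteq> W"
    using V unfolding kfin_dim_def by blast
  define B where "B = (\<lambda>x. x i) ` B0"
  have "V \<subseteq> {x \<in> kspace k. x i \<in> span B}"
    using B0(2) assms(2)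
    by (intro V_least[rule_format] conjI ksubspace_coordinate_preimage) (auto simp: B_def span_base)
  then have "x i \<in> (\<lambda>v. a i + v) ` span B" if "x \<in> A" for x
    using that assms(2) by (auto simp: A kadd_def)
  moreover have "finite B"
    using B0(1) by (simp add: B_def)
  ultimately show ?thesis
    using that by blast
qed

text \<open>Sets outside \<open>sets (Pi\<^sub>M I M)\<close> have measure \<open>0\<close> by convention, so \<open>A\<close> need not be
  measurable and the completeness of the factors plays no role.\<close>

lemma emeasure_PiM_null_coordinate:
  assumes "product_sigma_finite M" "finite I" "i \<in> I"
    and S: "S \<in> sets (M i)" "emeasure (M i) S = 0"
    and A: "A \<subseteq> space (Pi\<^sub>M I M)" "\<And>x. x \<in> A \<Longrightarrow> x i \<in> S"
  shows "emeasure (Pi\<^sub>M I M) A = 0"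
proof -
  interpret product_sigma_finite M by (rule assms(1))
  define X where "X j = (if j = i then S else space (M j))" for j
  have X: "X j \<in> sets (M j)" for j
    using S(1) by (simp add: X_def)
  have "emeasure (Pi\<^sub>M I M) (Pi\<^sub>E I X) = (\<Prod>j\<in>I. emeasure (M j) (X j))"
    using assms(2) X by (rule emeasure_PiM)
  also have "\<dots> = 0"
    by (intro prod_zero assms(2) bexI[OF _ assms(3)]) (simp add: X_def S(2))
  finally have "Pi\<^sub>E I X \<in> null_sets (Pi\<^sub>M I M)"
    by (intro null_setsI sets_PiM_I_finite assms(2) X)
  moreover have "A \<subseteq> Pi\<^sub>E I X"
  proof
    fix x assume "x \<in> A"
    then have "x \<in> Pi\<^sub>E I (\<lambda>j. space (M j))" "x i \<in> S"
      using A by (auto simp: space_PiM)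
    then show "x \<in> Pi\<^sub>E I X"
      by (auto simp: PiE_iff X_def)
  qed
  ultimately show ?thesis
    by (cases "A \<in> sets (Pi\<^sub>M I M)") (auto dest: null_sets_subset simp: emeasure_notin_sets)
qed

theorem mainTheorem2:
  fixes Q :: "'a::{real_inner, complete_space} measure"
  assumes inf_dim: "\<not> (\<exists>B::'a set. finite B \<and> span B = UNIV)"
    and prob: "prob_space Q"
    and sfin: "sigma_finite_measure Q"
    and compl: "complete_measure Q"
    and space: "space Q = UNIV"
    and borel: "sets borel \<subseteq> sets Q"
    and null: "\<And>A. fin_dim_affine A \<Longrightarrow> emeasure Q A = 0"
  shows "\<forall>k::nat. k \<ge> 1 \<longrightarrow> (\<forall>A. kfin_dim_affine k A \<longrightarrow>
           emeasure (PiM {..<k} (\<lambda>_. Q)) A = 0)"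
proof (intro allI impI)
  fix k :: nat and A :: "(nat \<Rightarrow> 'a) set"
  assume "k \<ge> 1" and A: "kfin_dim_affine k A"
  then have "0 < k" by simp
  obtain B c where B: "finite B" and A_first: "\<And>x. x \<in> A \<Longrightarrow> x 0 \<in> (\<lambda>v. c + v) ` span B"
    using kfin_dim_affine_coordinate[OF A \<open>0 < k\<close>] by metis
  define S where "S = (\<lambda>v. c + v) ` span B"
  have "S \<in> sets Q"
    unfolding S_def by (intro subsetD[OF borel] borel_closed closed_translation closed_span_finite B)
  moreover have "fin_dim_affine S"
    unfolding S_def fin_dim_affine_def
    by (intro exI[of _ c] exI[of _ "span B"] exI[of _ B]) (simp add: B)
  then have "emeasure Q S = 0"
    by (rule null)
  moreover have "A \<subseteq> kspace k"
    using A kadd_in_kspace unfolding kfin_dim_affine_def by blast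
  then have "A \<subseteq> space (Pi\<^sub>M {..<k} (\<lambda>_. Q))"
    by (simp add: space_PiM space kspace_def)
  moreover have "product_sigma_finite (\<lambda>_. Q)"
    using sfin by (simp add: product_sigma_finite_def)
  ultimately show "emeasure (PiM {..<k} (\<lambda>_. Q)) A = 0"
    using \<open>0 < k\<close> A_first
    by (intro emeasure_PiM_null_coordinate[where i = 0 and S = S]) (simp_all add: S_def)
qed

end
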